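(* Let $O$ be the closed disk of radius $R>0$ centered at the origin. Consider three pupils $P_1,P_2,P_3$, where $P_i$ is the closed disk of center $c_i\in\mathbb{R}^2$ and radius $\rho_i\ge0$ (radius $0$ meaning the single point $c_i$). Call the configuration valid if $O\subseteq\bigcup_{i,j=1}^3 D_{ij}$, where $D_{ij}$ is the closed disk of center $c_i-c_j$ and radius $\rho_i+\rho_j$. Then, among valid configurations, those in which one radius equals $R/2$ and the other two are $0$ (with arbitrary centers) minimize $\rho_1+\rho_2+\rho_3$; that is, every such configuration is valid, and every valid configuration satisfies $\rho_1+\rho_2+\rho_3\ge R/2$.
   Context: $D_{ij}=P_i\ominus P_j=\{a-b\mid a\in P_i,b\in P_j\}$ (Minkowski difference); $\bigcup_{i,j}D_{ij}$ is the auto-correlation support of the pupils. *)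

theory Defs
  imports "HOL-Analysis.Analysis"
begin

text \<open>Pupil i (i = 1,2,3) is the closed disk cball (c i) (rho i) in the plane.
  D_ij = P_i minus P_j (Minkowski difference) is the closed disk of centre c i - c j and
  radius rho i + rho j.\<close>

definition D :: "(nat \<Rightarrow> real^2) \<Rightarrow> (nat \<Rightarrow> real) \<Rightarrow> nat \<Rightarrow> nat \<Rightarrow> (real^2) set" where
  "D c rho i j = cball (c i - c j) (rho i + rho j)"

definition valid :: "real \<Rightarrow> (nat \<Rightarrow> real^2) \<Rightarrow> (nat \<Rightarrow> real) \<Rightarrow> bool" where
  "valid R c rho \<longleftrightarrow> cball 0 R \<subseteq> (\<Union>i\<in>{1..3}. \<Union>j\<in>{1..3}. D c rho i j)"

end

theory Submission
  imports Defs
begin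

text \<open>The configurations with radii (R/2, 0, 0) are valid because their diagonal difference
  disk D_kk is the whole disk cball 0 R. Conversely, if rho 1 + rho 2 + rho 3 < R/2, each diagonal
  disk D_ii = cball 0 (2 rho i) misses the circle sphere 0 R, so the circle is covered by the six
  disks D_ij with i \<noteq> j, whose radii add up to 4 (rho 1 + rho 2 + rho 3) < 2 R. But a disk of
  radius t < R meets the circle in an arc of angle at most 2 arcsin (t / R) \<le> pi t / R by
  Jordan's inequality, so arcs covering the full angle 2 pi need radii summing to at least 2 R.
  The angles are compared through the Lebesgue measure of the corresponding sets of
  parameters in [0, 2 pi].\<close>

lemma Jordan_inequality:
  assumes "0 \<le> y" "y \<le> pi / 2"
  shows "2 * y / pi \<le> sin y"
proof -
  have "concave_on {0..pi/2} sin"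
    by (rule f''_le0_imp_concave[where f'=cos and f''="\<lambda>x. - sin x"])
       (auto intro!: derivative_eq_intros sin_ge_zero)
  from concave_onD_Icc'[OF this, of y] assms
  show ?thesis by (simp add: field_simps)
qed

lemma cos_pi_half_mult_squared_le:
  assumes "0 \<le> x" "x \<le> 1"
  shows "(cos (pi * x / 2))\<^sup>2 \<le> 1 - x\<^sup>2"
proof -
  have "x \<le> sin (pi * x / 2)"
    using Jordan_inequality[of "pi * x / 2"] assms by (simp add: field_simps)
  then have "x\<^sup>2 \<le> (sin (pi * x / 2))\<^sup>2"
    using assms by (simp add: power_mono)
  then show ?thesis
    using sin_cos_squared_add[of "pi * x / 2"] by linarith
qed

lemma cos_ge_imp_near_multiple_of_2pi:
  assumes "- 2 * pi < x" "x \<le> 2 * pi" "0 \<le> \<alpha>" "\<alpha> \<le> pi" "cos \<alpha> \<le> cos x"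
  shows "\<exists>n\<in>{-1, 0, 1 :: int}. \<bar>x - 2 * pi * of_int n\<bar> \<le> \<alpha>"
proof -
  have near: "\<bar>y\<bar> \<le> \<alpha>" if "\<bar>y\<bar> \<le> pi" "cos y = cos x" for y
    using cos_mono_le_eq[of \<alpha> "\<bar>y\<bar>"] that assms by simp
  consider "\<bar>x\<bar> \<le> pi" | "pi < x" | "x < - pi"
    by linarith
  then show ?thesis
  proof cases
    case 1
    then show ?thesis using near[of x] by (intro bexI[of _ 0]) auto
  next
    case 2
    moreover have "cos (x - 2 * pi) = cos x"
      using cos_periodic[of "x - 2 * pi"] by simp
    ultimately show ?thesis using near[of "x - 2 * pi"] assms by (intro bexI[of _ 1]) auto
  next
    case 3
    then show ?thesis using near[of "x + 2 * pi"] assms by (intro bexI[of _ "-1"]) auto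
  qed
qed

text \<open>Three shifts by multiples of 2 pi suffice since \<phi> \<in> [0, 2 pi) and \<alpha> \<le> pi
  wherever angles_near is used.\<close>

definition angles_near :: "real \<Rightarrow> real \<Rightarrow> real set" where
  "angles_near \<phi> \<alpha> =
     {0..2*pi} \<inter> (\<Union>n\<in>{-1, 0, 1 :: int}. {\<phi> + 2 * pi * of_int n - \<alpha> .. \<phi> + 2 * pi * of_int n + \<alpha>})"

lemma angles_near_fmeasurable: "angles_near \<phi> \<alpha> \<in> fmeasurable lborel"
  by (rule fmeasurableI2[OF fmeasurable_compact[OF compact_Icc]]) (auto simp: angles_near_def)

lemma measure_angles_near_le:
  assumes "0 \<le> \<phi>" "\<phi> < 2 * pi" "0 \<le> \<alpha>" "\<alpha> \<le> pi"
  shows "measure lborel (angles_near \<phi> \<alpha>) \<le> 2 * \<alpha>"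
proof -
  define I where "I n = {0..2*pi} \<inter> {\<phi> + 2 * pi * n - \<alpha> .. \<phi> + 2 * pi * n + \<alpha>}" for n :: real
  have split: "angles_near \<phi> \<alpha> = I (-1) \<union> I 0 \<union> I 1"
    unfolding angles_near_def I_def by (simp add: Int_Un_distrib Un_assoc)
  have "measure lborel (angles_near \<phi> \<alpha>) \<le>
      measure lborel (I (-1)) + measure lborel (I 0) + measure lborel (I 1)"
  proof -
    have sets: "I n \<in> sets lborel" for n
      by (simp add: I_def)
    show ?thesis
      using measure_Un_le[OF sets.Un[OF sets sets] sets, of "-1" 0 1] measure_Un_le[OF sets sets, of "-1" 0]
      unfolding split by linarith
  qed
  also have "\<dots> \<le> 2 * \<alpha>"
    using assms by (simp add: I_def max_def min_def)
  finally show ?thesis .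
qed

definition polar :: "real \<Rightarrow> real \<Rightarrow> real^2" where
  "polar r \<theta> = (\<chi> i. if i = 1 then r * cos \<theta> else r * sin \<theta>)"

lemma polar_nth [simp]: "polar r \<theta> $ 1 = r * cos \<theta>" "polar r \<theta> $ 2 = r * sin \<theta>"
  by (simp_all add: polar_def)

lemma dist_vec2_squared: "(dist x (y :: real^2))\<^sup>2 = (x $ 1 - y $ 1)\<^sup>2 + (x $ 2 - y $ 2)\<^sup>2"
  by (simp add: dist_vec_def dist_real_def L2_set_def sum_2)

lemma dist_polar_squared:
  "(dist (polar r \<theta>) (polar s \<phi>))\<^sup>2 = r\<^sup>2 + s\<^sup>2 - 2 * r * s * cos (\<theta> - \<phi>)"
proof -
  have "(cos \<theta>)\<^sup>2 + (sin \<theta>)\<^sup>2 = 1" "(cos \<phi>)\<^sup>2 + (sin \<phi>)\<^sup>2 = 1"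
    by simp_all
  then show ?thesis
    unfolding dist_vec2_squared polar_nth cos_diff by algebra
qed

lemma norm_polar:
  assumes "0 \<le> r"
  shows "norm (polar r \<theta>) = r"
proof -
  have "polar 0 0 = 0"
    by (simp add: polar_def vec_eq_iff)
  then have "(norm (polar r \<theta>))\<^sup>2 = r\<^sup>2"
    using dist_polar_squared[of r \<theta> 0 0] by simp
  then show ?thesis
    using assms by simp
qed

lemma polar_coordinates: "\<exists>\<phi>\<in>{0..<2*pi}. polar (norm q) \<phi> = q"
proof (cases "q = 0")
  case True
  then show ?thesis by (intro bexI[of _ 0]) (auto simp: polar_def vec_eq_iff)
next
  case False
  have "(q $ 1 / norm q)\<^sup>2 + (q $ 2 / norm q)\<^sup>2 = ((q $ 1)\<^sup>2 + (q $ 2)\<^sup>2) / (norm q)\<^sup>2"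
    by (simp add: power_divide add_divide_distrib)
  also have "\<dots> = (norm q)\<^sup>2 / (norm q)\<^sup>2"
    using dist_vec2_squared[of q 0] by simp
  also have "\<dots> = 1"
    using False by simp
  finally have "(q $ 1 / norm q)\<^sup>2 + (q $ 2 / norm q)\<^sup>2 = 1" .
  then obtain \<phi> where \<phi>: "0 \<le> \<phi>" "\<phi> < 2 * pi" "q $ 1 / norm q = cos \<phi>" "q $ 2 / norm q = sin \<phi>"
    by (rule sincos_total_2pi)
  then have "q $ 1 = norm q * cos \<phi>" "q $ 2 = norm q * sin \<phi>"
    using False by (simp_all add: field_simps)
  with \<phi>(1,2) show ?thesis
    by (intro bexI[of _ \<phi>]) (simp_all add: vec_eq_iff forall_2)
qed

lemma half_pi_fraction_bounds:
  assumes "0 \<le> t" "t < R"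
  shows "0 \<le> pi * (t / R) / 2" "pi * (t / R) / 2 < pi / 2"
proof -
  have "0 \<le> t / R" "t / R < 1"
    using assms by auto
  show "0 \<le> pi * (t / R) / 2"
    using assms by (intro divide_nonneg_pos mult_nonneg_nonneg) auto
  show "pi * (t / R) / 2 < pi / 2"
    using divide_strict_right_mono[OF mult_strict_left_mono[OF \<open>t / R < 1\<close> pi_gt_zero], of 2]
    by simp
qed

lemma cos_angle_ge_if_dist_polar_le:
  assumes "0 \<le> m" "0 \<le> t" "t < R" "dist (polar R \<theta>) (polar m \<phi>) \<le> t"
  shows "cos (pi * (t / R) / 2) \<le> cos (\<theta> - \<phi>)"
proof -
  have "0 < R"
    using assms by linarith
  define \<alpha> where "\<alpha> = pi * (t / R) / 2"
  have "(cos \<alpha>)\<^sup>2 \<le> 1 - (t / R)\<^sup>2"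
    unfolding \<alpha>_def using assms by (intro cos_pi_half_mult_squared_le) auto
  then have cos_bound: "R\<^sup>2 * (cos \<alpha>)\<^sup>2 \<le> R\<^sup>2 - t\<^sup>2"
    using assms by (simp add: field_simps)
  have "R\<^sup>2 + m\<^sup>2 - 2 * R * m * cos (\<theta> - \<phi>) \<le> t\<^sup>2"
    using dist_polar_squared[of R \<theta> m \<phi>] power_mono[OF assms(4) zero_le_dist, of 2] by linarith
  with cos_bound have upper: "m\<^sup>2 + R\<^sup>2 * (cos \<alpha>)\<^sup>2 \<le> 2 * R * m * cos (\<theta> - \<phi>)"
    by linarith
  have "0 \<le> (R * cos \<alpha> - m)\<^sup>2"
    by simp
  then have AM_GM: "2 * R * m * cos \<alpha> \<le> m\<^sup>2 + R\<^sup>2 * (cos \<alpha>)\<^sup>2"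
    by (simp add: power2_diff power_mult_distrib mult_ac add_ac)
  have "0 < cos \<alpha>"
    unfolding \<alpha>_def using half_pi_fraction_bounds[OF assms(2,3)] by (intro cos_gt_zero_pi) auto
  then have "0 < R\<^sup>2 * (cos \<alpha>)\<^sup>2"
    using \<open>0 < R\<close> by simp
  then have "0 < m"
    using upper assms(1) by (cases "m = 0") auto
  have "(2 * R * m) * cos \<alpha> \<le> (2 * R * m) * cos (\<theta> - \<phi>)"
    using AM_GM upper by linarith
  then have "cos \<alpha> \<le> cos (\<theta> - \<phi>)"
    by (rule mult_left_le_imp_le) (use \<open>0 < R\<close> \<open>0 < m\<close> in simp)
  then show ?thesis
    unfolding \<alpha>_def .
qed

lemma angle_mem_angles_near_if_dist_polar_le:
  assumes "0 \<le> m" "0 \<le> t" "t < R" "dist (polar R \<theta>) (polar m \<phi>) \<le> t"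
    and "\<theta> \<in> {0..2*pi}" "\<phi> \<in> {0..<2*pi}"
  shows "\<theta> \<in> angles_near \<phi> (pi * (t / R) / 2)"
proof -
  have "\<exists>n\<in>{-1, 0, 1 :: int}. \<bar>\<theta> - \<phi> - 2 * pi * of_int n\<bar> \<le> pi * (t / R) / 2"
    using assms cos_angle_ge_if_dist_polar_le[OF assms(1-4)] half_pi_fraction_bounds[OF assms(2,3)]
    by (intro cos_ge_imp_near_multiple_of_2pi) auto
  with assms(5) show ?thesis
    unfolding angles_near_def by auto
qed

lemma sum_radii_ge_if_cover_circle:
  fixes q :: "'k \<Rightarrow> real^2" and t :: "'k \<Rightarrow> real"
  assumes "0 < R" "finite K" "\<And>k. k \<in> K \<Longrightarrow> 0 \<le> t k \<and> t k < R"
    and "sphere 0 R \<subseteq> (\<Union>k\<in>K. cball (q k) (t k))"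
  shows "2 * R \<le> (\<Sum>k\<in>K. t k)"
proof -
  obtain ang where ang: "\<And>q. ang q \<in> {0..<2*pi} \<and> polar (norm q) (ang q) = q"
    using polar_coordinates by metis
  define arc where "arc k = angles_near (ang (q k)) (pi * (t k / R) / 2)" for k
  have cover: "{0..2*pi} \<subseteq> (\<Union>k\<in>K. arc k)"
  proof
    fix \<theta> :: real
    assume \<theta>: "\<theta> \<in> {0..2*pi}"
    have "polar R \<theta> \<in> sphere 0 R"
      using assms(1) by (simp add: norm_polar)
    then obtain k where k: "k \<in> K" "dist (polar R \<theta>) (q k) \<le> t k"
      using assms(4) by (force simp: dist_commute)
    then have "\<theta> \<in> arc k"
      unfolding arc_def using assms(3) \<theta> ang[of "q k"]
      by (intro angle_mem_angles_near_if_dist_polar_le[of "norm (q k)"]) auto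
    with k show "\<theta> \<in> (\<Union>k\<in>K. arc k)"
      by blast
  qed
  have "2 * pi = measure lborel {0..2*pi}"
    by simp
  also have "\<dots> \<le> measure lborel (\<Union>k\<in>K. arc k)"
    using cover assms(2) angles_near_fmeasurable
    by (intro measure_mono_fmeasurable) (auto simp: arc_def)
  also have "\<dots> \<le> (\<Sum>k\<in>K. measure lborel (arc k))"
    using assms(2) fmeasurableD[OF angles_near_fmeasurable] by (intro measure_UNION_le) (auto simp: arc_def)
  also have "\<dots> \<le> (\<Sum>k\<in>K. pi / R * t k)"
  proof (intro sum_mono)
    fix k assume "k \<in> K"
    then have "measure lborel (arc k) \<le> 2 * (pi * (t k / R) / 2)"
      unfolding arc_def using assms(3) half_pi_fraction_bounds[of "t k" R] ang[of "q k"]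
      by (intro measure_angles_near_le) auto
    then show "measure lborel (arc k) \<le> pi / R * t k"
      by simp
  qed
  also have "\<dots> = pi / R * (\<Sum>k\<in>K. t k)"
    by (simp add: sum_distrib_left)
  finally show ?thesis
    using assms(1) by (simp add: field_simps)
qed

lemma valid_single_pupil:
  assumes "k \<in> {1..3}"
  shows "valid R c (\<lambda>i. if i = k then R / 2 else 0)"
  unfolding valid_def D_def using assms by (intro subsetI UN_I[of k]) auto

definition off_diagonal :: "(nat \<times> nat) set" where
  "off_diagonal = {(i, j). i \<in> {1..3} \<and> j \<in> {1..3} \<and> i \<noteq> j}"

lemma off_diagonal_eq: "off_diagonal = {(1, 2), (1, 3), (2, 1), (2, 3), (3, 1), (3, 2)}"
proof -
  have "{1..3 :: nat} = {1, 2, 3}"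
    by auto
  then show ?thesis
    unfolding off_diagonal_def by auto
qed

lemma sphere_subset_off_diagonal_D:
  assumes "valid R c rho" "\<forall>i\<in>{1..3}. 0 \<le> rho i" "rho 1 + rho 2 + rho 3 < R / 2"
  shows "sphere 0 R \<subseteq> (\<Union>(i, j)\<in>off_diagonal. D c rho i j)"
proof
  fix x :: "real^2"
  assume x: "x \<in> sphere 0 R"
  then obtain i j where ij: "i \<in> {1..3}" "j \<in> {1..3}" "x \<in> D c rho i j"
    using assms(1) by (auto simp: valid_def)
  have "0 \<le> rho 1" "0 \<le> rho 2" "0 \<le> rho 3"
    using assms(2) by auto
  moreover have "i = 1 \<or> i = 2 \<or> i = 3"
    using ij(1) by auto
  ultimately have "rho i \<le> rho 1 + rho 2 + rho 3"
    by (elim disjE) simp_all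
  then have "2 * rho i < R"
    using assms(3) by linarith
  then have "i \<noteq> j"
    using ij(3) x by (auto simp: D_def dist_norm)
  with ij show "x \<in> (\<Union>(i, j)\<in>off_diagonal. D c rho i j)"
    unfolding off_diagonal_def by blast
qed

lemma sum_off_diagonal:
  "(\<Sum>(i, j)\<in>off_diagonal. f i + f j) = 4 * (f 1 + f 2 + f 3 :: 'a :: comm_ring_1)"
  by (simp add: off_diagonal_eq algebra_simps)

lemma valid_imp_sum_radii_ge:
  assumes "0 < R" "valid R c rho" "\<forall>i\<in>{1..3}. 0 \<le> rho i"
  shows "R / 2 \<le> rho 1 + rho 2 + rho 3"
proof (rule ccontr)
  assume "\<not> ?thesis"
  then have small: "rho 1 + rho 2 + rho 3 < R / 2"
    by simp
  have "sphere 0 R \<subseteq> (\<Union>(i, j)\<in>off_diagonal. cball (c i - c j) (rho i + rho j))"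
    using sphere_subset_off_diagonal_D[OF assms(2,3) small] unfolding D_def .
  moreover have "0 \<le> rho 1" "0 \<le> rho 2" "0 \<le> rho 3"
    using assms(3) by auto
  ultimately have "2 * R \<le> (\<Sum>(i, j)\<in>off_diagonal. rho i + rho j)"
    using assms(1) small
    by (intro sum_radii_ge_if_cover_circle[where q="\<lambda>(i, j). c i - c j"]) (auto simp: off_diagonal_eq)
  then show False
    using small by (simp add: sum_off_diagonal)
qed

theorem lemma6:
  fixes R :: real and c :: "nat \<Rightarrow> real^2" and rho :: "nat \<Rightarrow> real"
  assumes "R > 0"
    and "\<forall>i\<in>{1..3}. rho i \<ge> 0"
  shows "(\<forall>(c' :: nat \<Rightarrow> real^2) k. k \<in> {1..3} \<longrightarrow>
            valid R c' (\<lambda>i. if i = k then R / 2 else 0))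
         \<and> (valid R c rho \<longrightarrow> rho 1 + rho 2 + rho 3 \<ge> R / 2)"
  using valid_single_pupil valid_imp_sum_radii_ge assms by blast

end
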